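(* If a join-congruence uniform lattice is shellable, then it is join-extremal. If a meet-congruence uniform lattice is shellable, then it is meet-extremal.
   Context: All lattices are finite. For a convex subset $C$ of a lattice $L$, let $I_L(C)=\{y\in L\mid\exists x\in C,\ y\le x\}$, and the doubling $L[C]$ is the subposet of $L\times\{0<1\}$ on $\big(I_L(C)\times\{0\}\big)\sqcup\big(((L\setminus I_L(C))\cup C)\times\{1\}\big)$. A lattice is join-congruence uniform (resp. meet-congruence uniform) if it is obtained from the one-element lattice by successive doublings of nonempty lower (resp. upper) pseudo-intervals, where a lower (resp. upper) pseudo-interval is a convex union of intervals sharing the same minimum (resp. maximum). Join-extremal (resp. meet-extremal) means the length (maximum number of elements of a chain minus one) equals the number of join-irreducible (resp. meet-irreducible) elements. The order complex of $L$ has the chains of $L$ as faces; $L$ is shellable if its facets (maximal chains) admit a linear order $F_1,\dots,F_k$ such that for each $j<k$, $\big(\bigcup_{i\le j}\langle F_i\rangle\big)\cap\langle F_{j+1}\rangle$ is pure of dimension $|F_{j+1}|-2$, with $\langle F\rangle$ the set of subsets of $F$. *)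

theory Defs
  imports Main
begin

text \<open>Every lattice obtained from the one-element lattice by successive doublings is
(up to isomorphism) a subposet of some product of two-element chains.  We encode an
element (x, b) of L x {0<1} as the list b # x, so that all such lattices are sets of
bool lists ordered componentwise (False < True).\<close>

definition ble :: "bool list \<Rightarrow> bool list \<Rightarrow> bool" where
  "ble xs ys \<longleftrightarrow> list_all2 (\<le>) xs ys"

definition convex_in :: "bool list set \<Rightarrow> bool list set \<Rightarrow> bool" where
  "convex_in L C \<longleftrightarrow> C \<subseteq> L \<and>
     (\<forall>x\<in>C. \<forall>z\<in>C. \<forall>y\<in>L. ble x y \<and> ble y z \<longrightarrow> y \<in> C)"

definition interval_in :: "bool list set \<Rightarrow> bool list \<Rightarrow> bool list \<Rightarrow> bool list set" where
  "interval_in L a b = {y\<in>L. ble a y \<and> ble y b}"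

definition lower_pseudo_interval :: "bool list set \<Rightarrow> bool list set \<Rightarrow> bool" where
  "lower_pseudo_interval L C \<longleftrightarrow> convex_in L C \<and>
     (\<exists>a\<in>L. \<exists>B. B \<noteq> {} \<and> B \<subseteq> L \<and> (\<forall>b\<in>B. ble a b) \<and> C = (\<Union>b\<in>B. interval_in L a b))"

definition upper_pseudo_interval :: "bool list set \<Rightarrow> bool list set \<Rightarrow> bool" where
  "upper_pseudo_interval L C \<longleftrightarrow> convex_in L C \<and>
     (\<exists>b\<in>L. \<exists>A. A \<noteq> {} \<and> A \<subseteq> L \<and> (\<forall>a\<in>A. ble a b) \<and> C = (\<Union>a\<in>A. interval_in L a b))"

definition down_closure :: "bool list set \<Rightarrow> bool list set \<Rightarrow> bool list set" where
  "down_closure L C = {y\<in>L. \<exists>x\<in>C. ble y x}"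

definition doubling :: "bool list set \<Rightarrow> bool list set \<Rightarrow> bool list set" where
  "doubling L C = (\<lambda>x. False # x) ` down_closure L C
                 \<union> (\<lambda>x. True # x) ` ((L - down_closure L C) \<union> C)"

inductive doubling_gen :: "(bool list set \<Rightarrow> bool list set \<Rightarrow> bool) \<Rightarrow> bool list set \<Rightarrow> bool"
  for P where
  base: "doubling_gen P {[]}"
| step: "doubling_gen P L \<Longrightarrow> C \<noteq> {} \<Longrightarrow> P L C \<Longrightarrow> doubling_gen P (doubling L C)"

definition order_iso_to :: "'a::order itself \<Rightarrow> bool list set \<Rightarrow> bool" where
  "order_iso_to _ S \<longleftrightarrow> (\<exists>f::'a \<Rightarrow> bool list. bij_betw f UNIV S \<and>
       (\<forall>x y. x \<le> y \<longleftrightarrow> ble (f x) (f y)))"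

definition join_cong_uniform :: "'a::{finite,lattice} itself \<Rightarrow> bool" where
  "join_cong_uniform T \<longleftrightarrow> (\<exists>S. doubling_gen lower_pseudo_interval S \<and> order_iso_to T S)"

definition meet_cong_uniform :: "'a::{finite,lattice} itself \<Rightarrow> bool" where
  "meet_cong_uniform T \<longleftrightarrow> (\<exists>S. doubling_gen upper_pseudo_interval S \<and> order_iso_to T S)"

definition join_irreducible :: "'a::lattice \<Rightarrow> bool" where
  "join_irreducible x \<longleftrightarrow> (\<exists>y. \<not> x \<le> y) \<and> (\<forall>y z. x = sup y z \<longrightarrow> x = y \<or> x = z)"

definition meet_irreducible :: "'a::lattice \<Rightarrow> bool" where
  "meet_irreducible x \<longleftrightarrow> (\<exists>y. \<not> y \<le> x) \<and> (\<forall>y z. x = inf y z \<longrightarrow> x = y \<or> x = z)"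

definition lattice_length :: "'a::{finite,order} itself \<Rightarrow> nat" where
  "lattice_length _ = Max {card S - 1 | S :: 'a set. Complete_Partial_Order.chain (\<le>) S}"

definition join_extremal :: "'a::{finite,lattice} itself \<Rightarrow> bool" where
  "join_extremal T \<longleftrightarrow> lattice_length T = card {x::'a. join_irreducible x}"

definition meet_extremal :: "'a::{finite,lattice} itself \<Rightarrow> bool" where
  "meet_extremal T \<longleftrightarrow> lattice_length T = card {x::'a. meet_irreducible x}"

definition max_chain :: "'a::order set \<Rightarrow> bool" where
  "max_chain F \<longleftrightarrow> Complete_Partial_Order.chain (\<le>) F \<and>
     (\<forall>G. Complete_Partial_Order.chain (\<le>) G \<and> F \<subseteq> G \<longrightarrow> G = F)"

definition pure_of_dim :: "'a set set \<Rightarrow> int \<Rightarrow> bool" where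
  "pure_of_dim K d \<longleftrightarrow> (\<forall>F\<in>K. (\<forall>G\<in>K. F \<subseteq> G \<longrightarrow> G = F) \<longrightarrow> int (card F) - 1 = d)"

definition shellable :: "'a::{finite,order} itself \<Rightarrow> bool" where
  "shellable _ \<longleftrightarrow> (\<exists>Fs :: 'a set list. distinct Fs \<and> set Fs = {F. max_chain F} \<and>
     (\<forall>j. j + 1 < length Fs \<longrightarrow>
        pure_of_dim ((\<Union>i\<le>j. Pow (Fs ! i)) \<inter> Pow (Fs ! (j + 1)))
                    (int (card (Fs ! (j + 1))) - 2)))"

end

theory Submission
  imports Defs
begin

(* Call a finite lattice cover-labelled if every cover x < y has a least element among the
   elements below y but not below x, its label.  Labels are join-irreducible, every
   join-irreducible element labels the cover just below it, and along a maximal chain distinct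
   covers have distinct labels, so the length of a maximal chain is its number of labels.
   Doubling a convex set with a least element preserves cover-labelledness, hence
   join-congruence uniform lattices are cover-labelled.  If two maximal chains differ in one
   element, each cover of the first that is not a cover of the second is transposed to a cover of
   the second with the same label.  In a shelling every chain meets an earlier one in a
   codimension-one face, so every label, hence every join-irreducible element, already occurs on
   the first chain; its length is therefore the number of join-irreducibles, and no chain is
   longer.  The meet case is dual: doubling a convex set with a greatest element preserves the
   dual labelling, in which each cover x < y has a greatest element above x but not above y. *)

section \<open>Cover labellings\<close>

definition covers_on :: "'a set \<Rightarrow> ('a \<Rightarrow> 'a \<Rightarrow> bool) \<Rightarrow> 'a \<Rightarrow> 'a \<Rightarrow> bool" where
  "covers_on A r x y \<longleftrightarrow> x \<in> A \<and> y \<in> A \<and> r x y \<and> x \<noteq> y \<and>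
     (\<forall>z\<in>A. r x z \<longrightarrow> r z y \<longrightarrow> z = x \<or> z = y)"

(* For the converse relation this asks for a greatest element above x but not above y. *)
definition cover_labelled_on :: "'a set \<Rightarrow> ('a \<Rightarrow> 'a \<Rightarrow> bool) \<Rightarrow> bool" where
  "cover_labelled_on A r \<longleftrightarrow> (\<forall>x y. covers_on A r x y \<longrightarrow>
     (\<exists>l\<in>A. r l y \<and> \<not> r l x \<and> (\<forall>z\<in>A. r z y \<longrightarrow> \<not> r z x \<longrightarrow> r l z)))"

lemma covers_on_converse: "covers_on A (\<lambda>x y. r y x) x y \<longleftrightarrow> covers_on A r y x"
  unfolding covers_on_def by blast

lemma cover_labelled_on_singleton: "cover_labelled_on {a} r"
  unfolding cover_labelled_on_def covers_on_def by blast

lemma cover_labelled_on_bij_betw: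
  assumes f: "bij_betw f A B"
    and r: "\<And>x y. x \<in> A \<Longrightarrow> y \<in> A \<Longrightarrow> r x y \<longleftrightarrow> s (f x) (f y)"
    and labelled: "cover_labelled_on B s"
  shows "cover_labelled_on A r"
  unfolding cover_labelled_on_def
proof (intro allI impI)
  fix x y assume cov: "covers_on A r x y"
  have B: "B = f ` A" and inj: "inj_on f A"
    using f by (auto simp: bij_betw_def)
  have "covers_on B s (f x) (f y)"
    using cov r inj unfolding covers_on_def B by (auto simp: inj_on_eq_iff)
  then obtain l where "l \<in> B" "s l (f y)" "\<not> s l (f x)"
    and least: "\<And>z. z \<in> B \<Longrightarrow> s z (f y) \<Longrightarrow> \<not> s z (f x) \<Longrightarrow> s l z"
    using labelled unfolding cover_labelled_on_def by blast
  moreover obtain l' where "l' \<in> A" "l = f l'"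
    using \<open>l \<in> B\<close> B by blast
  ultimately show "\<exists>l\<in>A. r l y \<and> \<not> r l x \<and> (\<forall>z\<in>A. r z y \<longrightarrow> \<not> r z x \<longrightarrow> r l z)"
    using cov r B unfolding covers_on_def by (metis image_eqI)
qed

section \<open>Doubling preserves cover labellings\<close>

lemma ble_refl [simp]: "ble x x"
  unfolding ble_def by (simp add: list_all2_refl)

lemma ble_trans: "ble x y \<Longrightarrow> ble y z \<Longrightarrow> ble x z"
  unfolding ble_def by (rule list_all2_trans[of "(\<le>)" "(\<le>)" "(\<le>)"]) auto

lemma ble_Cons_Cons [simp]: "ble (a # x) (b # y) \<longleftrightarrow> a \<le> b \<and> ble x y"
  unfolding ble_def by simp

lemma down_closure_subset: "down_closure L C \<subseteq> L"
  unfolding down_closure_def by blast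

lemma down_closure_downward:
  "x \<in> down_closure L C \<Longrightarrow> z \<in> L \<Longrightarrow> ble z x \<Longrightarrow> z \<in> down_closure L C"
  unfolding down_closure_def using ble_trans by blast

lemma subset_down_closure: "C \<subseteq> L \<Longrightarrow> C \<subseteq> down_closure L C"
  unfolding down_closure_def using ble_refl by blast

lemma convex_in_subset: "convex_in L C \<Longrightarrow> C \<subseteq> L"
  unfolding convex_in_def by blast

lemma convex_in_down_closure:
  assumes "convex_in L C" "c \<in> C" "x \<in> down_closure L C" "ble c x"
  shows "x \<in> C"
  using assms unfolding convex_in_def down_closure_def by blast

lemma Cons_mem_doubling [simp]:
  "b # x \<in> doubling L C \<longleftrightarrow>
     (if b then x \<in> L - down_closure L C \<or> x \<in> C else x \<in> down_closure L C)"
  unfolding doubling_def by auto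

lemma doubling_memE:
  assumes "z \<in> doubling L C" "C \<subseteq> L"
  obtains b x where "z = b # x" "x \<in> L"
  using assms down_closure_subset unfolding doubling_def by blast

(* The least and the greatest element of doubling L C lying over x. *)
definition lower_lift :: "bool list set \<Rightarrow> bool list set \<Rightarrow> bool list \<Rightarrow> bool list" where
  "lower_lift L C x = (x \<notin> down_closure L C) # x"

definition upper_lift :: "bool list set \<Rightarrow> bool list set \<Rightarrow> bool list \<Rightarrow> bool list" where
  "upper_lift L C x = (x \<notin> down_closure L C \<or> x \<in> C) # x"

lemma lower_lift_mem: "x \<in> L \<Longrightarrow> lower_lift L C x \<in> doubling L C"
  unfolding lower_lift_def by simp

lemma upper_lift_mem: "x \<in> L \<Longrightarrow> upper_lift L C x \<in> doubling L C"
  unfolding upper_lift_def using subset_down_closure by auto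

lemma lower_lift_le:
  assumes "b # z \<in> doubling L C" "x \<in> L" "ble x z"
  shows "ble (lower_lift L C x) (b # z)"
  using assms down_closure_downward[of z L C x] unfolding lower_lift_def by (cases b) auto

lemma upper_lift_ge:
  assumes "convex_in L C" "b # z \<in> doubling L C" "x \<in> L" "ble z x"
  shows "ble (b # z) (upper_lift L C x)"
proof (cases "x \<notin> down_closure L C \<or> x \<in> C")
  case False
  have "\<not> b"
  proof
    assume b
    with assms(2) have "z \<in> C"
      using False assms(4) down_closure_downward[of x L C z] by auto
    with False show False
      using assms convex_in_down_closure by blast
  qed
  with False assms(4) show ?thesis unfolding upper_lift_def by simp
qed (use assms(4) in \<open>simp add: upper_lift_def\<close>)

lemma covers_on_doubling_fibre:
  assumes "covers_on (doubling L C) ble (b # x) (b' # x)"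
  shows "x \<in> C \<and> \<not> b \<and> b'"
  using assms unfolding covers_on_def by (cases b; cases b') auto

lemma covers_on_doubling_base:
  assumes convex: "convex_in L C" and cov: "covers_on (doubling L C) ble (b # x) (b' # y)"
    and "x \<noteq> y"
  shows "covers_on L ble x y"
proof -
  have CL: "C \<subseteq> L" using convex by (rule convex_in_subset)
  have mem: "b # x \<in> doubling L C" "b' # y \<in> doubling L C" and "b \<le> b'" "ble x y"
    using cov unfolding covers_on_def by auto
  then have "x \<in> L" "y \<in> L"
    using doubling_memE[OF _ CL] by (metis list.inject)+
  moreover have "z = x \<or> z = y" if z: "z \<in> L" "ble x z" "ble z y" for z
  proof -
    have "\<exists>c. c # z \<in> doubling L C \<and> b \<le> c \<and> c \<le> b'"
    proof (cases "b = b'")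
      case True
      have "b # z \<in> doubling L C"
      proof (cases b)
        case True
        then have "x \<in> L - down_closure L C \<or> x \<in> C" using mem by simp
        then show ?thesis
          using True z convex convex_in_down_closure down_closure_downward by fastforce
      next
        case False
        then show ?thesis
          using mem \<open>b = b'\<close> z down_closure_downward by auto
      qed
      with True show ?thesis by blast
    next
      case False
      with \<open>b \<le> b'\<close> show ?thesis
        by (intro exI[of _ "z \<notin> down_closure L C"]) (auto simp: z(1))
    qed
    then obtain c where "c # z \<in> doubling L C" "b \<le> c" "c \<le> b'" by blast
    with cov z have "c # z = b # x \<or> c # z = b' # y"
      unfolding covers_on_def by (metis ble_Cons_Cons)
    then show ?thesis by blast
  qed
  ultimately show ?thesis using cov \<open>x \<noteq> y\<close> \<open>ble x y\<close> unfolding covers_on_def by blast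
qed

lemma covers_on_doubling_not_below:
  assumes convex: "convex_in L C" and cov: "covers_on (doubling L C) ble (b # x) (b' # y)"
    and "x \<noteq> y" and z: "c # z \<in> doubling L C" "ble (c # z) (b' # y)" "\<not> ble (c # z) (b # x)"
  shows "\<not> ble z x"
proof
  assume "ble z x"
  with z have "c" "\<not> b" "b'" by (cases c; cases b; cases b'; simp)+
  have "x \<in> down_closure L C"
    using cov \<open>\<not> b\<close> unfolding covers_on_def by simp
  moreover have "z \<in> C"
    using z(1) \<open>c\<close> \<open>ble z x\<close> calculation down_closure_downward by auto
  ultimately have "True # x \<in> doubling L C"
    using convex \<open>ble z x\<close> convex_in_down_closure by auto
  moreover have "ble (b # x) (True # x)" "ble (True # x) (b' # y)"
    using cov \<open>\<not> b\<close> \<open>b'\<close> unfolding covers_on_def by auto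
  ultimately have "True # x = b # x \<or> True # x = b' # y"
    using cov unfolding covers_on_def by blast
  with \<open>\<not> b\<close> \<open>x \<noteq> y\<close> show False by simp
qed

lemma covers_on_doubling_not_above:
  assumes CL: "C \<subseteq> L" and cov: "covers_on (doubling L C) ble (b # x) (b' # y)"
    and "x \<noteq> y" and z: "c # z \<in> doubling L C" "ble (b # x) (c # z)" "\<not> ble (b' # y) (c # z)"
  shows "\<not> ble y z"
proof
  assume "ble y z"
  with z have "\<not> c" "\<not> b" "b'" by (cases c; cases b; cases b'; simp)+
  have "y \<in> C"
    using cov z(1) \<open>\<not> c\<close> \<open>b'\<close> \<open>ble y z\<close> down_closure_downward
    unfolding covers_on_def by auto
  then have "False # y \<in> doubling L C"
    using CL subset_down_closure by auto
  moreover have "ble (b # x) (False # y)" "ble (False # y) (b' # y)"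
    using cov \<open>\<not> b\<close> \<open>b'\<close> unfolding covers_on_def by auto
  ultimately have "False # y = b # x \<or> False # y = b' # y"
    using cov unfolding covers_on_def by blast
  with \<open>b'\<close> \<open>x \<noteq> y\<close> show False by simp
qed

lemma doubling_fibre_cover_label_least:
  assumes CL: "C \<subseteq> L" and a: "a \<in> C" "\<And>c. c \<in> C \<Longrightarrow> ble a c"
    and cov: "covers_on (doubling L C) ble (b # x) (b' # x)"
  shows "\<exists>l\<in>doubling L C. ble l (b' # x) \<and> \<not> ble l (b # x) \<and>
           (\<forall>z\<in>doubling L C. ble z (b' # x) \<longrightarrow> \<not> ble z (b # x) \<longrightarrow> ble l z)"
proof -
  have "x \<in> C" and fibre: "b = False" "b' = True" using covers_on_doubling_fibre[OF cov] by simp_all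
  then have "x \<in> down_closure L C" using subset_down_closure[OF CL] by blast
  have "ble (True # a) z'"
    if z': "z' \<in> doubling L C" "ble z' (True # x)" "\<not> ble z' (False # x)" for z'
  proof -
    obtain c z where z: "z' = c # z" using z'(1) CL doubling_memE by metis
    have "ble z x" using z'(2) unfolding z by simp
    then have "c" using z'(3) unfolding z by (cases c) simp_all
    have "z \<notin> L - down_closure L C"
      using down_closure_downward \<open>x \<in> down_closure L C\<close> \<open>ble z x\<close> by blast
    with z'(1) \<open>c\<close> have "z \<in> C" unfolding z by auto
    then show ?thesis using a(2) \<open>c\<close> unfolding z by simp
  qed
  moreover have "True # a \<in> doubling L C" "ble (True # a) (True # x)" "\<not> ble (True # a) (False # x)"
    using a \<open>x \<in> C\<close> by simp_all
  ultimately show ?thesis unfolding fibre by blast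
qed

lemma doubling_base_cover_label_least:
  assumes labelled: "cover_labelled_on L ble" and convex: "convex_in L C"
    and cov: "covers_on (doubling L C) ble (b # x) (b' # y)" and "x \<noteq> y"
  shows "\<exists>l\<in>doubling L C. ble l (b' # y) \<and> \<not> ble l (b # x) \<and>
           (\<forall>z\<in>doubling L C. ble z (b' # y) \<longrightarrow> \<not> ble z (b # x) \<longrightarrow> ble l z)"
proof -
  obtain l where l: "l \<in> L" "ble l y" "\<not> ble l x"
    and least: "\<And>z. z \<in> L \<Longrightarrow> ble z y \<Longrightarrow> \<not> ble z x \<Longrightarrow> ble l z"
    using labelled covers_on_doubling_base[OF convex cov \<open>x \<noteq> y\<close>]
    unfolding cover_labelled_on_def by blast
  have "ble (lower_lift L C l) z'"
    if z': "z' \<in> doubling L C" "ble z' (b' # y)" "\<not> ble z' (b # x)" for z'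
  proof -
    obtain c z where z: "z' = c # z" "z \<in> L"
      using z'(1) convex_in_subset[OF convex] doubling_memE by metis
    have "\<not> ble z x"
      using covers_on_doubling_not_below[OF convex cov \<open>x \<noteq> y\<close>] z' unfolding z by blast
    moreover have "ble z y" using z'(2) unfolding z by simp
    ultimately show ?thesis using lower_lift_le z'(1) l(1) least z by blast
  qed
  moreover have "ble (lower_lift L C l) (b' # y)"
    using lower_lift_le cov l unfolding covers_on_def by blast
  moreover have "\<not> ble (lower_lift L C l) (b # x)"
    using l(3) unfolding lower_lift_def by simp
  ultimately show ?thesis using lower_lift_mem l(1) by blast
qed

lemma cover_labelled_on_doubling_least:
  assumes labelled: "cover_labelled_on L ble" and convex: "convex_in L C"
    and a: "a \<in> C" "\<And>c. c \<in> C \<Longrightarrow> ble a c"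
  shows "cover_labelled_on (doubling L C) ble"
  unfolding cover_labelled_on_def
proof (intro allI impI)
  fix x' y' assume cov: "covers_on (doubling L C) ble x' y'"
  obtain b x b' y where "x' = b # x" "y' = b' # y"
    using cov convex_in_subset[OF convex] doubling_memE unfolding covers_on_def by metis
  with cov show "\<exists>l\<in>doubling L C. ble l y' \<and> \<not> ble l x' \<and>
      (\<forall>z\<in>doubling L C. ble z y' \<longrightarrow> \<not> ble z x' \<longrightarrow> ble l z)"
    using doubling_fibre_cover_label_least[OF convex_in_subset[OF convex] a]
      doubling_base_cover_label_least[OF labelled convex]
    by (cases "x = y") simp_all
qed

lemma doubling_fibre_cover_label_greatest:
  assumes convex: "convex_in L C" and a: "a \<in> C" "\<And>c. c \<in> C \<Longrightarrow> ble c a"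
    and cov: "covers_on (doubling L C) ble (b # x) (b' # x)"
  shows "\<exists>m\<in>doubling L C. ble (b # x) m \<and> \<not> ble (b' # x) m \<and>
           (\<forall>z\<in>doubling L C. ble (b # x) z \<longrightarrow> \<not> ble (b' # x) z \<longrightarrow> ble z m)"
proof -
  have CL: "C \<subseteq> L" using convex by (rule convex_in_subset)
  have "x \<in> C" and fibre: "b = False" "b' = True" using covers_on_doubling_fibre[OF cov] by simp_all
  have "ble z' (False # a)"
    if z': "z' \<in> doubling L C" "ble (False # x) z'" "\<not> ble (True # x) z'" for z'
  proof -
    obtain c z where z: "z' = c # z" using z'(1) CL doubling_memE by metis
    have "ble x z" using z'(2) unfolding z by simp
    then have "\<not> c" using z'(3) unfolding z by (cases c) simp_all
    with z'(1) have "z \<in> down_closure L C" unfolding z by simp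
    then have "z \<in> C" using convex_in_down_closure[OF convex \<open>x \<in> C\<close>] \<open>ble x z\<close> by blast
    then show ?thesis using a(2) \<open>\<not> c\<close> unfolding z by simp
  qed
  moreover have "False # a \<in> doubling L C"
    using a(1) CL subset_down_closure by auto
  moreover have "ble (False # x) (False # a)" "\<not> ble (True # x) (False # a)"
    using a \<open>x \<in> C\<close> by simp_all
  ultimately show ?thesis unfolding fibre by blast
qed

lemma doubling_base_cover_label_greatest:
  assumes labelled: "cover_labelled_on L (\<lambda>u v. ble v u)" and convex: "convex_in L C"
    and cov: "covers_on (doubling L C) ble (b # x) (b' # y)" and "x \<noteq> y"
  shows "\<exists>m\<in>doubling L C. ble (b # x) m \<and> \<not> ble (b' # y) m \<and>
           (\<forall>z\<in>doubling L C. ble (b # x) z \<longrightarrow> \<not> ble (b' # y) z \<longrightarrow> ble z m)"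
proof -
  have CL: "C \<subseteq> L" using convex by (rule convex_in_subset)
  obtain m where m: "m \<in> L" "ble x m" "\<not> ble y m"
    and greatest: "\<And>z. z \<in> L \<Longrightarrow> ble x z \<Longrightarrow> \<not> ble y z \<Longrightarrow> ble z m"
    using labelled covers_on_doubling_base[OF convex cov \<open>x \<noteq> y\<close>]
    unfolding cover_labelled_on_def covers_on_converse[where r = ble] by blast
  have "ble z' (upper_lift L C m)"
    if z': "z' \<in> doubling L C" "ble (b # x) z'" "\<not> ble (b' # y) z'" for z'
  proof -
    obtain c z where z: "z' = c # z" "z \<in> L" using z'(1) CL doubling_memE by metis
    have "\<not> ble y z"
      using covers_on_doubling_not_above[OF CL cov \<open>x \<noteq> y\<close>] z' unfolding z by blast
    moreover have "ble x z" using z'(2) unfolding z by simp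
    ultimately show ?thesis using upper_lift_ge convex z'(1) m(1) greatest z by blast
  qed
  moreover have "ble (b # x) (upper_lift L C m)"
    using upper_lift_ge convex cov m unfolding covers_on_def by blast
  moreover have "\<not> ble (b' # y) (upper_lift L C m)"
    using m(3) unfolding upper_lift_def by simp
  ultimately show ?thesis using upper_lift_mem m(1) by blast
qed

lemma cover_labelled_on_doubling_greatest:
  assumes labelled: "cover_labelled_on L (\<lambda>u v. ble v u)" and convex: "convex_in L C"
    and a: "a \<in> C" "\<And>c. c \<in> C \<Longrightarrow> ble c a"
  shows "cover_labelled_on (doubling L C) (\<lambda>u v. ble v u)"
  unfolding cover_labelled_on_def covers_on_converse[where r = ble]
proof (intro allI impI)
  fix y' x' assume cov: "covers_on (doubling L C) ble x' y'"
  obtain b x b' y where "x' = b # x" "y' = b' # y"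
    using cov convex_in_subset[OF convex] doubling_memE unfolding covers_on_def by metis
  with cov show "\<exists>m\<in>doubling L C. ble x' m \<and> \<not> ble y' m \<and>
      (\<forall>z\<in>doubling L C. ble x' z \<longrightarrow> \<not> ble y' z \<longrightarrow> ble z m)"
    using doubling_fibre_cover_label_greatest[OF convex a]
      doubling_base_cover_label_greatest[OF labelled convex]
    by (cases "x = y") simp_all
qed

lemma lower_pseudo_interval_least:
  assumes "lower_pseudo_interval L C"
  obtains a where "a \<in> C" "\<And>c. c \<in> C \<Longrightarrow> ble a c"
proof -
  obtain a B where "B \<noteq> {}" "C = (\<Union>b\<in>B. interval_in L a b)" "a \<in> L" "\<forall>b\<in>B. ble a b"
    using assms unfolding lower_pseudo_interval_def by blast
  then have "a \<in> C" "\<And>c. c \<in> C \<Longrightarrow> ble a c"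
    unfolding interval_in_def by auto
  then show ?thesis by (rule that)
qed

lemma upper_pseudo_interval_greatest:
  assumes "upper_pseudo_interval L C"
  obtains a where "a \<in> C" "\<And>c. c \<in> C \<Longrightarrow> ble c a"
proof -
  obtain a A where "A \<noteq> {}" "C = (\<Union>b\<in>A. interval_in L b a)" "a \<in> L" "\<forall>b\<in>A. ble b a"
    using assms unfolding upper_pseudo_interval_def by blast
  then have "a \<in> C" "\<And>c. c \<in> C \<Longrightarrow> ble c a"
    unfolding interval_in_def by auto
  then show ?thesis by (rule that)
qed

lemma cover_labelled_on_lower_doubling_gen:
  "doubling_gen lower_pseudo_interval S \<Longrightarrow> cover_labelled_on S ble"
proof (induction rule: doubling_gen.induct)
  case (step L C)
  obtain a where "a \<in> C" "\<And>c. c \<in> C \<Longrightarrow> ble a c"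
    using lower_pseudo_interval_least[OF step.hyps(3)] by metis
  moreover have "convex_in L C"
    using step.hyps(3) unfolding lower_pseudo_interval_def by blast
  ultimately show ?case
    using step.IH by (blast intro: cover_labelled_on_doubling_least)
qed (rule cover_labelled_on_singleton)

lemma cover_labelled_on_upper_doubling_gen:
  "doubling_gen upper_pseudo_interval S \<Longrightarrow> cover_labelled_on S (\<lambda>x y. ble y x)"
proof (induction rule: doubling_gen.induct)
  case (step L C)
  obtain a where "a \<in> C" "\<And>c. c \<in> C \<Longrightarrow> ble c a"
    using upper_pseudo_interval_greatest[OF step.hyps(3)] by metis
  moreover have "convex_in L C"
    using step.hyps(3) unfolding upper_pseudo_interval_def by blast
  ultimately show ?case
    using step.IH by (blast intro: cover_labelled_on_doubling_greatest)
qed (rule cover_labelled_on_singleton)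

lemma join_cong_uniform_cover_labelled:
  assumes "join_cong_uniform TYPE('a::{finite,lattice})"
  shows "cover_labelled_on UNIV ((\<le>) :: 'a \<Rightarrow> 'a \<Rightarrow> bool)"
proof -
  obtain S and f :: "'a \<Rightarrow> bool list"
    where "doubling_gen lower_pseudo_interval S" "bij_betw f UNIV S"
      "\<And>x y. x \<le> y \<longleftrightarrow> ble (f x) (f y)"
    using assms unfolding join_cong_uniform_def order_iso_to_def by blast
  then show ?thesis
    using cover_labelled_on_bij_betw cover_labelled_on_lower_doubling_gen by metis
qed

lemma meet_cong_uniform_cover_labelled:
  assumes "meet_cong_uniform TYPE('a::{finite,lattice})"
  shows "cover_labelled_on UNIV ((\<ge>) :: 'a \<Rightarrow> 'a \<Rightarrow> bool)"
proof -
  obtain S and f :: "'a \<Rightarrow> bool list"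
    where "doubling_gen upper_pseudo_interval S" "bij_betw f UNIV S"
      "\<And>x y. y \<le> x \<longleftrightarrow> ble (f y) (f x)"
    using assms unfolding meet_cong_uniform_def order_iso_to_def by blast
  then show ?thesis
    using cover_labelled_on_bij_betw[where s = "\<lambda>x y. ble y x"]
      cover_labelled_on_upper_doubling_gen by metis
qed

section \<open>Maximal chains of finite orders\<close>

lemma chain_converse:
  "Complete_Partial_Order.chain (\<lambda>x y. r y x) A \<longleftrightarrow> Complete_Partial_Order.chain r A"
  unfolding chain_def by blast

context order
begin

definition covers :: "'a \<Rightarrow> 'a \<Rightarrow> bool" where
  "covers x y \<longleftrightarrow> x < y \<and> (\<forall>z. x \<le> z \<longrightarrow> z \<le> y \<longrightarrow> z = x \<or> z = y)"

(* A junk value unless {z. z \<le> y \<and> \<not> z \<le> x} has a least element. *)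
definition cover_label :: "'a \<Rightarrow> 'a \<Rightarrow> 'a" where
  "cover_label x y = (LEAST z. z \<le> y \<and> \<not> z \<le> x)"

(* Restates max_chain inside the class, so that it can be instantiated with the dual order. *)
definition maximal_chain :: "'a set \<Rightarrow> bool" where
  "maximal_chain F \<longleftrightarrow> Complete_Partial_Order.chain (\<le>) F \<and>
     (\<forall>G. Complete_Partial_Order.chain (\<le>) G \<and> F \<subseteq> G \<longrightarrow> G = F)"

definition chain_labels :: "'a set \<Rightarrow> 'a set" where
  "chain_labels F = {cover_label x y | x y. x \<in> F \<and> y \<in> F \<and> covers x y}"

lemma covers_on_UNIV_iff: "covers_on UNIV (\<le>) x y \<longleftrightarrow> covers x y"
  unfolding covers_on_def covers_def by (auto simp: less_le)

lemma chain_covers_le: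
  assumes "Complete_Partial_Order.chain (\<le>) F" "y \<in> F" "z \<in> F" "covers x y" "x < z"
  shows "y \<le> z"
proof (rule ccontr)
  assume "\<not> y \<le> z"
  with assms(1-3) have "z \<le> y" unfolding chain_def by blast
  with assms(4,5) \<open>\<not> y \<le> z\<close> show False unfolding covers_def by (auto simp: less_le)
qed

lemma chain_covers_unique:
  assumes "Complete_Partial_Order.chain (\<le>) F" "y \<in> F" "y' \<in> F" "covers x y" "covers x y'"
  shows "y = y'"
proof (rule order.antisym)
  have "x < y" "x < y'" using assms(4,5) unfolding covers_def by simp_all
  then show "y \<le> y'" "y' \<le> y" using chain_covers_le assms by blast+
qed

lemma maximal_chain_mem:
  assumes "maximal_chain F" "\<And>y. y \<in> F \<Longrightarrow> x \<le> y \<or> y \<le> x"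
  shows "x \<in> F"
proof -
  have "Complete_Partial_Order.chain (\<le>) (insert x F)"
    using assms unfolding maximal_chain_def chain_def by blast
  then show ?thesis using assms(1) unfolding maximal_chain_def by blast
qed

lemma maximal_chain_covers:
  assumes F: "maximal_chain F" and "x \<in> F" "y \<in> F" "x < y"
    and gap: "\<And>z. z \<in> F \<Longrightarrow> x < z \<Longrightarrow> \<not> z < y"
  shows "covers x y"
  unfolding covers_def
proof (intro conjI allI impI)
  fix z assume z: "x \<le> z" "z \<le> y"
  show "z = x \<or> z = y"
  proof (rule ccontr)
    assume "\<not> (z = x \<or> z = y)"
    with z have "x < z" "z < y" by (auto simp: less_le)
    have "z \<le> g \<or> g \<le> z" if "g \<in> F" for g
    proof -
      have "g \<le> x \<or> x < g" "g < y \<or> y \<le> g"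
        using F that \<open>x \<in> F\<close> \<open>y \<in> F\<close> unfolding maximal_chain_def chain_def
        by (auto simp: le_less)
      then show ?thesis
        using gap[OF that] \<open>x < z\<close> \<open>z < y\<close> by (auto dest: order.trans)
    qed
    then have "z \<in> F" using F maximal_chain_mem by blast
    then show False using gap \<open>x < z\<close> \<open>z < y\<close> by blast
  qed
qed (fact \<open>x < y\<close>)

lemma maximal_chain_upper_cover:
  assumes F: "maximal_chain F" "finite F" and "x \<in> F" "y \<in> F" "x < y"
  obtains w where "w \<in> F" "covers x w" "w \<le> y"
proof -
  obtain w where w: "w \<in> {z \<in> F. x < z}" "w \<le> y"
    and min: "\<And>z. z \<in> {z \<in> F. x < z} \<Longrightarrow> z \<le> w \<Longrightarrow> w = z"
    using finite_has_minimal2[of "{z \<in> F. x < z}" y] assms by auto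
  have "covers x w"
  proof (rule maximal_chain_covers[OF F(1) \<open>x \<in> F\<close>])
    show "w \<in> F" "x < w" using w(1) by simp_all
    show "\<not> z < w" if "z \<in> F" "x < z" for z
      using min[of z] that by (force simp: less_le)
  qed
  with w that show ?thesis by blast
qed

lemma maximal_chain_lower_cover:
  assumes F: "maximal_chain F" "finite F" and "x \<in> F" "y \<in> F" "x < y"
  obtains u where "u \<in> F" "covers u y" "x \<le> u"
proof -
  obtain u where u: "u \<in> {z \<in> F. z < y}" "x \<le> u"
    and max: "\<And>z. z \<in> {z \<in> F. z < y} \<Longrightarrow> u \<le> z \<Longrightarrow> u = z"
    using finite_has_maximal2[of "{z \<in> F. z < y}" x] assms by auto
  have "covers u y"
  proof (rule maximal_chain_covers[OF F(1) _ \<open>y \<in> F\<close>])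
    show "u \<in> F" "u < y" using u(1) by simp_all
    show "\<not> z < y" if "z \<in> F" "u < z" for z
      using max[of z] that by (force simp: less_le)
  qed
  with u that show ?thesis by blast
qed

lemma maximal_chain_extend:
  assumes "finite (UNIV :: 'a set)" "Complete_Partial_Order.chain (\<le>) A"
  obtains F where "maximal_chain F" "A \<subseteq> F"
proof -
  define X where "X = {G. Complete_Partial_Order.chain (\<le>) G \<and> A \<subseteq> G}"
  have "finite (UNIV :: 'a set set)"
    using assms(1) by (simp add: Finite_Set.finite_set)
  then have "finite X" by (rule finite_subset[rotated]) simp
  moreover have "A \<in> X" using assms(2) unfolding X_def by blast
  ultimately obtain F where F: "F \<in> X" "\<forall>G\<in>X. F \<subseteq> G \<longrightarrow> F = G"
    using Finite_Set.finite_has_maximal2[of X A] by auto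
  show ?thesis
  proof
    show "maximal_chain F" "A \<subseteq> F"
      using F unfolding X_def maximal_chain_def by auto
  qed
qed

end

section \<open>Labels along maximal chains of a cover-labelled lattice\<close>

context lattice
begin

(* join_irreducible, restated inside the class for the same reason as maximal_chain. *)
definition sup_irreducible :: "'a \<Rightarrow> bool" where
  "sup_irreducible x \<longleftrightarrow> (\<exists>y. \<not> x \<le> y) \<and> (\<forall>y z. x = sup y z \<longrightarrow> x = y \<or> x = z)"

context
  assumes finite_UNIV: "finite (UNIV :: 'a set)"
    and labelled: "cover_labelled_on UNIV (\<le>)"
begin

lemma finite_elements: "finite (A :: 'a set)"
  using finite_UNIV by (rule finite_subset[rotated]) simp

lemma cover_label:
  assumes "covers x y"
  shows cover_label_le: "cover_label x y \<le> y"
    and cover_label_not_le: "\<not> cover_label x y \<le> x"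
    and cover_label_least: "\<And>z. z \<le> y \<Longrightarrow> \<not> z \<le> x \<Longrightarrow> cover_label x y \<le> z"
proof -
  obtain l where l: "l \<le> y" "\<not> l \<le> x" "\<And>z. z \<le> y \<Longrightarrow> \<not> z \<le> x \<Longrightarrow> l \<le> z"
    using labelled assms unfolding cover_labelled_on_def covers_on_UNIV_iff by blast
  then have "cover_label x y = l"
    unfolding cover_label_def by (blast intro: Least_equality)
  with l show "cover_label x y \<le> y" "\<not> cover_label x y \<le> x"
    "\<And>z. z \<le> y \<Longrightarrow> \<not> z \<le> x \<Longrightarrow> cover_label x y \<le> z" by simp_all
qed

lemma Sup_fin_mem_maximal_chain: "maximal_chain F \<Longrightarrow> Sup_fin UNIV \<in> F"
  using maximal_chain_mem Sup_fin.coboundedI[OF finite_UNIV] by blast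

lemma Inf_fin_mem_maximal_chain: "maximal_chain F \<Longrightarrow> Inf_fin UNIV \<in> F"
  using maximal_chain_mem Inf_fin.coboundedI[OF finite_UNIV] by blast

lemma sup_irreducible_cover_label:
  assumes "covers x y"
  shows "sup_irreducible (cover_label x y)"
  unfolding sup_irreducible_def
proof (intro conjI allI impI)
  let ?l = "cover_label x y"
  show "\<exists>z. \<not> ?l \<le> z" using cover_label_not_le[OF assms] by blast
  fix a b assume l: "?l = sup a b"
  have le: "a \<le> ?l" "b \<le> ?l" "a \<le> y" "b \<le> y"
    using cover_label_le[OF assms] unfolding l by simp_all
  have "c \<le> x" if "c \<le> ?l" "c \<le> y" "?l \<noteq> c" for c
  proof (rule ccontr)
    assume "\<not> c \<le> x"
    with that(2) have "?l \<le> c" by (rule cover_label_least[OF assms])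
    with that(1,3) show False by simp
  qed
  with le have "?l = a \<or> ?l = b \<or> sup a b \<le> x" by (meson sup_least)
  then show "?l = a \<or> ?l = b"
    using cover_label_not_le[OF assms] l by auto
qed

lemma cover_label_sup_irreducible:
  assumes "sup_irreducible j" "covers m j"
  shows "cover_label m j = j"
proof -
  let ?l = "cover_label m j"
  have "m \<le> sup ?l m" "sup ?l m \<le> j"
    using cover_label_le[OF assms(2)] assms(2) unfolding covers_def by (auto simp: less_le)
  then have "sup ?l m = m \<or> sup ?l m = j"
    using assms(2) unfolding covers_def by blast
  moreover have "sup ?l m \<noteq> m"
    using cover_label_not_le[OF assms(2)] sup.absorb_iff2 by metis
  ultimately have "j = ?l \<or> j = m"
    using assms(1) unfolding sup_irreducible_def by metis
  with assms(2) show ?thesis unfolding covers_def by auto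
qed

lemma sup_irreducible_lower_cover:
  assumes "sup_irreducible j"
  obtains m where "covers m j"
proof -
  obtain y where "\<not> j \<le> y" using assms unfolding sup_irreducible_def by blast
  then have "inf j y \<noteq> j" using inf.absorb_iff1 by metis
  then have "{z. z < j} \<noteq> {}" using inf.cobounded1 less_le by blast
  then obtain m where m: "m \<in> {z. z < j}" "\<forall>z\<in>{z. z < j}. m \<le> z \<longrightarrow> m = z"
    using finite_has_maximal[OF finite_elements[of "{z. z < j}"]] by blast
  have "covers m j"
    using m unfolding covers_def by (auto simp: less_le)
  then show ?thesis by (rule that)
qed

lemma sup_irreducible_mem_chain_labels:
  assumes "sup_irreducible j"
  obtains F where "maximal_chain F" "j \<in> chain_labels F"
proof -
  obtain m where m: "covers m j" using assms by (rule sup_irreducible_lower_cover)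
  have "Complete_Partial_Order.chain (\<le>) {m, j}"
    using m unfolding covers_def chain_def by auto
  then obtain F where "maximal_chain F" "{m, j} \<subseteq> F"
    using maximal_chain_extend[OF finite_UNIV] by blast
  moreover have "j = cover_label m j"
    using cover_label_sup_irreducible[OF assms m] by simp
  ultimately show ?thesis
    using that m unfolding chain_labels_def by blast
qed

lemma chain_labels_subset_sup_irreducible: "chain_labels F \<subseteq> {x. sup_irreducible x}"
  unfolding chain_labels_def using sup_irreducible_cover_label by blast

lemma cover_label_eq_if_transposed:
  assumes ab: "covers a b" and cd: "covers c d" and "a \<le> c" "b \<le> d" "\<not> b \<le> c"
  shows "cover_label a b = cover_label c d"
proof -
  have "a \<le> inf b c" "inf b c \<le> b"
    using ab \<open>a \<le> c\<close> unfolding covers_def by (auto simp: less_le)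
  moreover have "inf b c \<noteq> b"
    using \<open>\<not> b \<le> c\<close> inf.absorb_iff1 by metis
  ultimately have meet: "inf b c = a"
    using ab unfolding covers_def by blast
  have "\<not> cover_label a b \<le> c"
  proof
    assume "cover_label a b \<le> c"
    with cover_label_le[OF ab] have "cover_label a b \<le> inf b c" by simp
    with meet cover_label_not_le[OF ab] show False by simp
  qed
  moreover have "cover_label a b \<le> d"
    using cover_label_le[OF ab] \<open>b \<le> d\<close> by (rule order.trans)
  ultimately have hl: "cover_label c d \<le> cover_label a b"
    by (rule cover_label_least[OF cd, rotated])
  have "cover_label c d \<le> b"
    using hl cover_label_le[OF ab] by (rule order.trans)
  moreover have "\<not> cover_label c d \<le> a"
    using cover_label_not_le[OF cd] \<open>a \<le> c\<close> order.trans by blast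
  ultimately have "cover_label a b \<le> cover_label c d"
    by (rule cover_label_least[OF ab])
  then show ?thesis using hl by (rule order.antisym)
qed

lemma chain_cover_label_inj:
  assumes F: "Complete_Partial_Order.chain (\<le>) F" and "x \<in> F" "y \<in> F" "x' \<in> F" "y' \<in> F"
    and cov: "covers x y" "covers x' y'" and eq: "cover_label x y = cover_label x' y'"
  shows "x = x'"
proof -
  have "\<not> x < x'" if "x \<in> F" "y \<in> F" "x' \<in> F" "y' \<in> F" "covers x y" "covers x' y'"
    "cover_label x y = cover_label x' y'" for x y x' y'
  proof
    assume "x < x'"
    with that have "cover_label x y \<le> x'"
      using chain_covers_le[OF F] cover_label_le order.trans by blast
    with that show False using cover_label_not_le by simp
  qed
  moreover have "x \<le> x' \<or> x' \<le> x" using F assms(2,4) unfolding chain_def by blast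
  ultimately show ?thesis using assms eq by (metis order.order_iff_strict)
qed

lemma card_chain_labels:
  assumes F: "maximal_chain F"
  shows "card (chain_labels F) = card F - 1"
proof -
  define P where "P = {(x, y). x \<in> F \<and> y \<in> F \<and> covers x y}"
  have chain: "Complete_Partial_Order.chain (\<le>) F"
    using F unfolding maximal_chain_def by blast
  have "inj_on (\<lambda>(x, y). cover_label x y) P"
  proof (rule inj_onI, clarify)
    fix x y x' y' assume "(x, y) \<in> P" "(x', y') \<in> P" "cover_label x y = cover_label x' y'"
    moreover from this have "x = x'"
      using chain_cover_label_inj[OF chain] unfolding P_def by blast
    ultimately show "x = x' \<and> y = y'"
      using chain_covers_unique[OF chain] unfolding P_def by blast
  qed
  moreover have "chain_labels F = (\<lambda>(x, y). cover_label x y) ` P"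
    unfolding chain_labels_def P_def by auto
  ultimately have "card (chain_labels F) = card P" by (simp add: card_image)
  also have "card P = card (fst ` P)"
    using chain_covers_unique[OF chain] unfolding P_def by (intro card_image[symmetric] inj_onI) auto
  also have "fst ` P = F - {Sup_fin UNIV}"
  proof
    show "fst ` P \<subseteq> F - {Sup_fin UNIV}"
      using Sup_fin.coboundedI[OF finite_UNIV] unfolding P_def covers_def by (force simp: less_le_not_le)
    show "F - {Sup_fin UNIV} \<subseteq> fst ` P"
    proof
      fix x assume x: "x \<in> F - {Sup_fin UNIV}"
      then have "x < Sup_fin UNIV" using Sup_fin.coboundedI[OF finite_UNIV] by (auto simp: less_le)
      then obtain w where "w \<in> F" "covers x w"
        using maximal_chain_upper_cover[OF F finite_elements] x Sup_fin_mem_maximal_chain[OF F] by blast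
      with x show "x \<in> fst ` P" unfolding P_def by force
    qed
  qed
  also have "card (F - {Sup_fin UNIV}) = card F - 1"
    using Sup_fin_mem_maximal_chain[OF F] finite_elements by simp
  finally show ?thesis .
qed

lemma cover_label_ending_at_exchanged:
  assumes G: "maximal_chain G" and H: "maximal_chain H" and GH: "G - {v} \<subseteq> H" "v \<notin> H"
    and cov: "x \<in> G" "v \<in> G" "covers x v"
  shows "cover_label x v \<in> chain_labels H"
proof -
  have "v < Sup_fin UNIV"
    using Sup_fin.coboundedI[OF finite_UNIV] Sup_fin_mem_maximal_chain[OF H] GH(2)
    by (auto simp: less_le)
  then obtain w where w: "w \<in> G" "covers v w"
    using maximal_chain_upper_cover[OF G finite_elements] cov(2) Sup_fin_mem_maximal_chain[OF G]
    by blast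
  have "x < v" "v < w" using cov(3) w(2) unfolding covers_def by simp_all
  then have "x \<in> H" "w \<in> H" "x < w" using GH cov(1) w(1) by auto
  then obtain y where y: "y \<in> H" "covers y w" "x \<le> y"
    using maximal_chain_lower_cover[OF H finite_elements] by blast
  have "\<not> v \<le> y"
  proof
    assume "v \<le> y"
    moreover have "y \<le> w" "y \<noteq> w" using y(2) unfolding covers_def by auto
    ultimately show False using w(2) y(1) GH(2) unfolding covers_def by blast
  qed
  with cov(3) y have "cover_label x v = cover_label y w"
    using \<open>v < w\<close> by (intro cover_label_eq_if_transposed) simp_all
  with y \<open>w \<in> H\<close> show ?thesis unfolding chain_labels_def by blast
qed

lemma cover_label_starting_at_exchanged:
  assumes G: "maximal_chain G" and H: "maximal_chain H" and GH: "G - {v} \<subseteq> H" "v \<notin> H"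
    and cov: "v \<in> G" "y \<in> G" "covers v y"
  shows "cover_label v y \<in> chain_labels H"
proof -
  have "Inf_fin UNIV < v"
    using Inf_fin.coboundedI[OF finite_UNIV] Inf_fin_mem_maximal_chain[OF H] GH(2)
    by (auto simp: less_le)
  then obtain u where u: "u \<in> G" "covers u v"
    using maximal_chain_lower_cover[OF G finite_elements] cov(1) Inf_fin_mem_maximal_chain[OF G]
    by blast
  have "u < v" "v < y" using cov(3) u(2) unfolding covers_def by simp_all
  then have "u \<in> H" "y \<in> H" "u < y" using GH cov(2) u(1) by auto
  then obtain x where x: "x \<in> H" "covers u x" "x \<le> y"
    using maximal_chain_upper_cover[OF H finite_elements] by blast
  have "\<not> x \<le> v"
  proof
    assume "x \<le> v"
    moreover have "u \<le> x" "u \<noteq> x" using x(2) unfolding covers_def by auto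
    ultimately show False using u(2) x(1) GH(2) unfolding covers_def by blast
  qed
  with cov(3) x have "cover_label v y = cover_label u x"
    using \<open>u < v\<close> by (intro cover_label_eq_if_transposed[symmetric]) simp_all
  with x \<open>u \<in> H\<close> show ?thesis unfolding chain_labels_def by blast
qed

lemma chain_labels_subset_if_exchange:
  assumes G: "maximal_chain G" and H: "maximal_chain H" and GH: "G - {v} \<subseteq> H"
  shows "chain_labels G \<subseteq> chain_labels H"
proof (cases "v \<in> H")
  case True
  with GH have "G \<subseteq> H" by blast
  with G H have "G = H" unfolding maximal_chain_def by blast
  then show ?thesis by simp
next
  case False
  show ?thesis
  proof
    fix l assume "l \<in> chain_labels G"
    then obtain x y where xy: "x \<in> G" "y \<in> G" "covers x y" "l = cover_label x y"
      unfolding chain_labels_def by blast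
    consider "x \<noteq> v" "y \<noteq> v" | "y = v" | "x = v" by blast
    then show "l \<in> chain_labels H"
    proof cases
      case 1
      with xy GH show ?thesis unfolding chain_labels_def by blast
    next
      case 2
      with xy show ?thesis using cover_label_ending_at_exchanged[OF G H GH False] by blast
    next
      case 3
      with xy show ?thesis using cover_label_starting_at_exchanged[OF G H GH False] by blast
    qed
  qed
qed

lemma card_chain_le_card_sup_irreducible:
  assumes "Complete_Partial_Order.chain (\<le>) S"
  shows "card S - 1 \<le> card {x. sup_irreducible x}"
proof -
  obtain F where "maximal_chain F" "S \<subseteq> F"
    using maximal_chain_extend[OF finite_UNIV assms] by blast
  then have "card S - 1 \<le> card (chain_labels F)"
    using card_chain_labels card_mono[OF finite_elements] diff_le_mono by metis
  also have "\<dots> \<le> card {x. sup_irreducible x}"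
    using card_mono[OF finite_elements chain_labels_subset_sup_irreducible] .
  finally show ?thesis .
qed

lemma chain_labels_subset_head:
  assumes Fs: "set Fs = {F. maximal_chain F}"
    and exchange: "\<And>k. 0 < k \<Longrightarrow> k < length Fs \<Longrightarrow> \<exists>i<k. \<exists>v. Fs ! k - {v} \<subseteq> Fs ! i"
    and "k < length Fs"
  shows "chain_labels (Fs ! k) \<subseteq> chain_labels (Fs ! 0)"
  using \<open>k < length Fs\<close>
proof (induction k rule: less_induct)
  case (less k)
  show ?case
  proof (cases "k = 0")
    case False
    then obtain i v where "i < k" "Fs ! k - {v} \<subseteq> Fs ! i"
      using exchange less.prems by blast
    moreover have "maximal_chain (Fs ! k)" "maximal_chain (Fs ! i)"
      using Fs less.prems \<open>i < k\<close> nth_mem by auto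
    ultimately have "chain_labels (Fs ! k) \<subseteq> chain_labels (Fs ! i)"
      using chain_labels_subset_if_exchange by blast
    also have "\<dots> \<subseteq> chain_labels (Fs ! 0)"
      using less.IH \<open>i < k\<close> less.prems by simp
    finally show ?thesis .
  qed simp
qed

lemma length_eq_card_sup_irreducible:
  assumes Fs: "set Fs = {F. maximal_chain F}"
    and exchange: "\<And>k. 0 < k \<Longrightarrow> k < length Fs \<Longrightarrow> \<exists>i<k. \<exists>v. Fs ! k - {v} \<subseteq> Fs ! i"
  shows "Max {card S - 1 | S. Complete_Partial_Order.chain (\<le>) S} = card {x. sup_irreducible x}"
proof -
  obtain F where "maximal_chain F"
    using maximal_chain_extend[OF finite_UNIV chain_empty] by blast
  with Fs have "Fs \<noteq> []" by auto
  then have "Fs ! 0 \<in> set Fs" by simp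
  with Fs have F0: "maximal_chain (Fs ! 0)" by blast
  have "{x. sup_irreducible x} \<subseteq> chain_labels (Fs ! 0)"
  proof
    fix j assume "j \<in> {x. sup_irreducible x}"
    then obtain F where "maximal_chain F" "j \<in> chain_labels F"
      using sup_irreducible_mem_chain_labels by blast
    moreover from this(1) obtain k where "k < length Fs" "F = Fs ! k"
      using Fs by (metis in_set_conv_nth mem_Collect_eq)
    ultimately show "j \<in> chain_labels (Fs ! 0)"
      using chain_labels_subset_head[OF Fs exchange] by blast
  qed
  with chain_labels_subset_sup_irreducible have "chain_labels (Fs ! 0) = {x. sup_irreducible x}"
    by blast
  then have "card {x. sup_irreducible x} = card (Fs ! 0) - 1"
    using card_chain_labels[OF F0] by simp
  moreover have "Complete_Partial_Order.chain (\<le>) (Fs ! 0)"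
    using F0 unfolding maximal_chain_def by blast
  ultimately have "card {x. sup_irreducible x} \<in> {card S - 1 | S. Complete_Partial_Order.chain (\<le>) S}"
    by blast
  moreover have "finite {card S - 1 | S. Complete_Partial_Order.chain (\<le>) S}"
    using card_chain_le_card_sup_irreducible
    by (intro finite_subset[OF _ finite_atMost[of "card {x. sup_irreducible x}"]]) auto
  ultimately show ?thesis
    using card_chain_le_card_sup_irreducible by (intro Max_eqI) auto
qed

end

end

section \<open>Shellings\<close>

lemma shellable_exchange_enumeration:
  assumes "shellable TYPE('a::{finite,order})"
  obtains Fs where "set Fs = {F :: 'a set. max_chain F}"
    and "\<And>k. 0 < k \<Longrightarrow> k < length Fs \<Longrightarrow> \<exists>i<k. \<exists>v. Fs ! k - {v} \<subseteq> Fs ! i"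
proof -
  obtain Fs :: "'a set list" where Fs: "set Fs = {F. max_chain F}"
    and pure: "\<And>j. j + 1 < length Fs \<Longrightarrow>
      pure_of_dim ((\<Union>i\<le>j. Pow (Fs ! i)) \<inter> Pow (Fs ! (j + 1))) (int (card (Fs ! (j + 1))) - 2)"
    using assms unfolding shellable_def by blast
  have "\<exists>i<k. \<exists>v. Fs ! k - {v} \<subseteq> Fs ! i" if "0 < k" "k < length Fs" for k
  proof -
    define K where "K = (\<Union>i\<le>k - 1. Pow (Fs ! i)) \<inter> Pow (Fs ! k)"
    have "pure_of_dim K (int (card (Fs ! k)) - 2)"
      using pure[of "k - 1"] that unfolding K_def by simp
    moreover have "finite K" "K \<noteq> {}"
      unfolding K_def by auto
    then obtain T where T: "T \<in> K" "\<forall>U\<in>K. T \<subseteq> U \<longrightarrow> T = U"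
      using finite_has_maximal by blast
    ultimately have "card T + 1 = card (Fs ! k)"
      unfolding pure_of_dim_def by force
    moreover obtain i where "i \<le> k - 1" "T \<subseteq> Fs ! i" "T \<subseteq> Fs ! k"
      using T(1) unfolding K_def by blast
    ultimately have "card (Fs ! k - T) = 1"
      by (simp add: card_Diff_subset)
    then obtain v where "Fs ! k - T = {v}"
      by (auto simp: card_1_singleton_iff)
    moreover have "i < k" using \<open>i \<le> k - 1\<close> that(1) by linarith
    ultimately show ?thesis using \<open>T \<subseteq> Fs ! i\<close> by blast
  qed
  with Fs that show ?thesis by blast
qed

lemma max_chain_eq_maximal_chain: "max_chain = (maximal_chain :: 'a::order set \<Rightarrow> bool)"
  unfolding max_chain_def maximal_chain_def ..

lemma max_chain_eq_dual_maximal_chain: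
  "max_chain = order.maximal_chain ((\<ge>) :: 'a::order \<Rightarrow> 'a \<Rightarrow> bool)"
  unfolding max_chain_def order.maximal_chain_def[OF dual_order] chain_converse[where r = "(\<le>)"] ..

lemma join_extremal_if_cover_labelled_shellable:
  assumes "cover_labelled_on UNIV ((\<le>) :: 'a::{finite,lattice} \<Rightarrow> 'a \<Rightarrow> bool)"
    and "shellable TYPE('a)"
  shows "join_extremal TYPE('a)"
proof -
  obtain Fs where Fs: "set Fs = {F :: 'a set. max_chain F}"
    and exchange: "\<And>k. 0 < k \<Longrightarrow> k < length Fs \<Longrightarrow> \<exists>i<k. \<exists>v. Fs ! k - {v} \<subseteq> Fs ! i"
    using shellable_exchange_enumeration[OF assms(2)] by metis
  from length_eq_card_sup_irreducible[OF finite_UNIV assms(1)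
      Fs[unfolded max_chain_eq_maximal_chain] exchange]
  show ?thesis
    unfolding join_extremal_def lattice_length_def join_irreducible_def sup_irreducible_def .
qed

lemma meet_extremal_if_cover_labelled_shellable:
  assumes "cover_labelled_on UNIV ((\<ge>) :: 'a::{finite,lattice} \<Rightarrow> 'a \<Rightarrow> bool)"
    and "shellable TYPE('a)"
  shows "meet_extremal TYPE('a)"
proof -
  obtain Fs where Fs: "set Fs = {F :: 'a set. max_chain F}"
    and exchange: "\<And>k. 0 < k \<Longrightarrow> k < length Fs \<Longrightarrow> \<exists>i<k. \<exists>v. Fs ! k - {v} \<subseteq> Fs ! i"
    using shellable_exchange_enumeration[OF assms(2)] by metis
  from lattice.length_eq_card_sup_irreducible[OF dual_lattice finite_UNIV assms(1)
      Fs[unfolded max_chain_eq_dual_maximal_chain] exchange]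
  show ?thesis
    unfolding meet_extremal_def lattice_length_def meet_irreducible_def
      lattice.sup_irreducible_def[OF dual_lattice] chain_converse[where r = "(\<le>)"] .
qed

theorem corollary3p25:
  shows "(join_cong_uniform TYPE('a::{finite,lattice}) \<and> shellable TYPE('a)
           \<longrightarrow> join_extremal TYPE('a)) \<and>
         (meet_cong_uniform TYPE('a) \<and> shellable TYPE('a)
           \<longrightarrow> meet_extremal TYPE('a))"
  using join_extremal_if_cover_labelled_shellable join_cong_uniform_cover_labelled
    meet_extremal_if_cover_labelled_shellable meet_cong_uniform_cover_labelled
  by blast

end
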